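(* Let $(V,(\cdot\,,\cdot)_V)$ be an admissible integral $\mathrm{Cl}_{n,0}$-module (with positive definite inner product $(\cdot\,,\cdot)_V$) and $(U,\langle\cdot\,,\cdot\rangle_U)$ an admissible integral $\mathrm{Cl}_{0,2}$-module. Then the scalar product space $V\otimes U$ with scalar product $\langle v\otimes u,v'\otimes u'\rangle=(v,v')_V\langle u,u'\rangle_U$ is (carries the structure of) an admissible integral $\mathrm{Cl}_{0,n+2}$-module.
   Context: A scalar product is a real symmetric non-degenerate bilinear form. $\mathrm{Cl}_{p,q}$ is the real Clifford algebra generated by $\mathbb R^{p,q}$ ($\mathbb R^{p+q}$ with quadratic form $x_1^2+\dots+x_p^2-x_{p+1}^2-\dots-x_{p+q}^2$) with relation $z^2=-\langle z,z\rangle\cdot1$; orthonormal generators $z_k$ satisfy $\langle z_k,z_l\rangle=0$ ($k\neq l$), $\langle z_k,z_k\rangle=\pm1$. A $\mathrm{Cl}_{p,q}$-module $V$ with representation $J$ is admissible if it carries a scalar product with $\langle J_zu,v\rangle_V=-\langle u,J_zv\rangle_V$ for all $z,u,v$; it is an admissible integral module if it has a basis $\{v_\alpha\}$ with $\langle v_\alpha,v_\beta\rangle_V=0$ ($\alpha\neq\beta$), $\langle v_\alpha,v_\alpha\rangle_V=\pm1$, and $\langle J_{z_k}v_\alpha,v_\beta\rangle_V\in\{1,-1,0\}$ for all orthonormal generators $z_k$ and all $\alpha,\beta$. *)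

theory Defs
  imports "HOL-Analysis.Analysis"
begin

text \<open>Coordinate model: a finite-dimensional real vector space is \<open>real^'a\<close>.
  A Cl_{p,q}-module is given by the images \<open>J k\<close> (k < p+q) of the standard
  orthonormal generators z_k of R^{p,q}; z_k has square norm +1 for k < p and -1
  for p \<le> k < p+q. The relation z^2 = -<z,z> becomes J_k^2 = -<z_k,z_k> id and
  J_k J_l = - J_l J_k for k \<noteq> l.\<close>

definition gen_sign :: "nat \<Rightarrow> nat \<Rightarrow> real" where
  "gen_sign p k = (if k < p then 1 else -1)"

definition clifford_rep :: "nat \<Rightarrow> nat \<Rightarrow> (nat \<Rightarrow> 'v::real_vector \<Rightarrow> 'v) \<Rightarrow> bool" where
  "clifford_rep p q J \<longleftrightarrow>
     (\<forall>k<p+q. linear (J k)) \<and>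
     (\<forall>k<p+q. \<forall>x. J k (J k x) = - (gen_sign p k *\<^sub>R x)) \<and>
     (\<forall>k<p+q. \<forall>l<p+q. k \<noteq> l \<longrightarrow> (\<forall>x. J k (J l x) = - J l (J k x)))"

definition scalar_product :: "('v::real_vector \<Rightarrow> 'v \<Rightarrow> real) \<Rightarrow> bool" where
  "scalar_product B \<longleftrightarrow> bilinear B \<and> (\<forall>x y. B x y = B y x) \<and>
     (\<forall>x. (\<forall>y. B x y = 0) \<longrightarrow> x = 0)"

definition admissible_module :: "nat \<Rightarrow> nat \<Rightarrow> (nat \<Rightarrow> 'v::real_vector \<Rightarrow> 'v) \<Rightarrow> ('v \<Rightarrow> 'v \<Rightarrow> real) \<Rightarrow> bool" where
  "admissible_module p q J B \<longleftrightarrow> clifford_rep p q J \<and> scalar_product B \<and>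
     (\<forall>k<p+q. \<forall>u v. B (J k u) v = - B u (J k v))"

definition admissible_integral_module :: "nat \<Rightarrow> nat \<Rightarrow> (nat \<Rightarrow> 'v::real_vector \<Rightarrow> 'v) \<Rightarrow> ('v \<Rightarrow> 'v \<Rightarrow> real) \<Rightarrow> bool" where
  "admissible_integral_module p q J B \<longleftrightarrow> admissible_module p q J B \<and>
     (\<exists>S. independent S \<and> span S = UNIV \<and>
        (\<forall>a\<in>S. \<forall>b\<in>S. a \<noteq> b \<longrightarrow> B a b = 0) \<and>
        (\<forall>a\<in>S. B a a = 1 \<or> B a a = -1) \<and>
        (\<forall>k<p+q. \<forall>a\<in>S. \<forall>b\<in>S. B (J k a) b \<in> {1, -1, 0}))"

definition tensor :: "real^'a \<Rightarrow> real^'b \<Rightarrow> real^('a \<times> 'b)" where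
  "tensor v u = (\<chi> ij. v $ fst ij * u $ snd ij)"

end

theory Submission
  imports Defs
begin

(* The generators z_k (k < n) of Cl_{0,n+2} act on V (x) U by J_k (x) M and the last two by
   1 (x) K_0 and 1 (x) K_1, where M is an operator on U with M^2 = -1 that anticommutes with
   K_0, K_1 and is symmetric for <,>_U; then J_k (x) M squares to +1 and is skew, and all
   generators anticommute.
   To construct M, split U into orthogonal blocks spanned by e, K_0 e, K_1 e, K_0 K_1 e with
   <e,e>_U = 1: blocks can be split off one after another, because the orthogonal complement of
   finitely many blocks is K-invariant and nondegenerate. With R the reflection fixing e, K_0 e
   and negating K_1 e, K_0 K_1 e in every block, M = -K_1 R does the job. The block vectors form
   a basis of U on which K_0, K_1 and M act by signed permutations, and their tensor products
   with the integral basis of V form an integral basis of V (x) U. *)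

section \<open>Tensor products of coordinate vectors\<close>

lemma bilinear_tensor: "bilinear tensor"
  unfolding bilinear_def by (auto intro!: linearI simp: tensor_def vec_eq_iff algebra_simps)

lemma tensor_uminus_left [simp]: "tensor (- v) u = - tensor v u"
  and tensor_uminus_right [simp]: "tensor v (- u) = - tensor v u"
  by (simp_all add: tensor_def vec_eq_iff)

lemma tensor_axis: "tensor (axis i 1) (axis j 1) = axis (i, j) (1::real)"
  by (auto simp: tensor_def vec_eq_iff axis_def)

lemma Basis_eq_tensor:
  fixes b :: "real^('a::finite \<times> 'b::finite)"
  assumes "b \<in> Basis"
  obtains v u where "b = tensor v u"
proof -
  from assms obtain i j where "b = axis (i, j) 1" unfolding Basis_vec_def by auto
  then show ?thesis using that tensor_axis by metis
qed

lemma span_tensors_eq_UNIV: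
  assumes A: "span A = UNIV" and C: "span C = UNIV"
  shows "span ((\<lambda>(a, c). tensor a c) ` (A \<times> C)) = UNIV"
proof -
  let ?T = "(\<lambda>(a, c). tensor a c) ` (A \<times> C)"
  have lin_left: "linear (\<lambda>v. tensor v u)" and lin_right: "linear (tensor v)" for v u
    using bilinear_tensor unfolding bilinear_def by auto
  have left: "tensor a u \<in> span ?T" if "a \<in> A" for a u
  proof -
    have "span (tensor a ` C) \<subseteq> span ?T" using that by (intro span_mono) auto
    moreover have "tensor a u \<in> span (tensor a ` C)"
      using C by (simp add: span_linear_image[OF lin_right])
    ultimately show ?thesis by blast
  qed
  have "tensor v u \<in> span ?T" for v u
  proof -
    have "span ((\<lambda>v. tensor v u) ` A) \<subseteq> span ?T"
      using left by (simp add: image_subset_iff span_minimal)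
    moreover have "tensor v u \<in> span ((\<lambda>v. tensor v u) ` A)"
      using A by (simp add: span_linear_image[OF lin_left])
    ultimately show ?thesis by blast
  qed
  then have "Basis \<subseteq> span ?T" by (metis Basis_eq_tensor subsetI)
  then show ?thesis by (metis span_Basis span_minimal subspace_span top.extremum_uniqueI)
qed

lemma linear_eq_on_tensors:
  fixes f g :: "real^('a::finite \<times> 'b::finite) \<Rightarrow> 'c::real_vector"
  assumes "linear f" "linear g" "\<And>v u. f (tensor v u) = g (tensor v u)"
  shows "f = g"
  by (rule linear_eq_stdbasis[OF assms(1,2)]) (metis Basis_eq_tensor assms(3))

lemma bilinear_eq_on_tensors:
  fixes f g :: "real^('a::finite \<times> 'b::finite) \<Rightarrow> real^('a \<times> 'b) \<Rightarrow> 'c::real_vector"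
  assumes "bilinear f" "bilinear g"
    and "\<And>v u v' u'. f (tensor v u) (tensor v' u') = g (tensor v u) (tensor v' u')"
  shows "f = g"
proof (rule bilinear_eq_stdbasis[OF assms(1,2)])
  fix i j :: "real^('a \<times> 'b)"
  assume "i \<in> Basis" "j \<in> Basis"
  then obtain v u v' u' where "i = tensor v u" "j = tensor v' u'"
    using Basis_eq_tensor by metis
  then show "f i j = g i j" using assms(3) by simp
qed

definition kronecker :: "real^'a^'c \<Rightarrow> real^'b^'d \<Rightarrow> real^('a \<times> 'b)^('c \<times> 'd)"
  where "kronecker A C = (\<chi> p q. A $ fst p $ fst q * C $ snd p $ snd q)"

lemma kronecker_mult_tensor: "kronecker A C *v tensor v u = tensor (A *v v) (C *v u)"
proof -
  have "(\<Sum>q\<in>UNIV. A $ i $ fst q * C $ j $ snd q * (v $ fst q * u $ snd q))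
      = (\<Sum>i'\<in>UNIV. A $ i $ i' * v $ i') * (\<Sum>j'\<in>UNIV. C $ j $ j' * u $ j')" for i j
  proof -
    have "(\<Sum>i'\<in>UNIV. A $ i $ i' * v $ i') * (\<Sum>j'\<in>UNIV. C $ j $ j' * u $ j')
        = (\<Sum>(i', j')\<in>UNIV \<times> UNIV. A $ i $ i' * v $ i' * (C $ j $ j' * u $ j'))"
      by (simp add: sum_product sum.cartesian_product)
    also have "\<dots> = (\<Sum>q\<in>UNIV. A $ i $ fst q * C $ j $ snd q * (v $ fst q * u $ snd q))"
      by (simp add: UNIV_Times_UNIV case_prod_beta' mult_ac)
    finally show ?thesis by simp
  qed
  then show ?thesis
    by (simp add: kronecker_def tensor_def matrix_vector_mult_def vec_eq_iff)
qed

definition tensor_map ::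
    "(real^'a \<Rightarrow> real^'c) \<Rightarrow> (real^'b \<Rightarrow> real^'d) \<Rightarrow> real^('a \<times> 'b) \<Rightarrow> real^('c \<times> 'd)"
  where "tensor_map f g x = kronecker (matrix f) (matrix g) *v x"

lemma linear_tensor_map: "linear (tensor_map f g)"
  unfolding tensor_map_def by (rule matrix_vector_mul_linear)

lemma tensor_map_tensor:
  assumes "linear f" "linear g"
  shows "tensor_map f g (tensor v u) = tensor (f v) (g u)"
  by (simp add: tensor_map_def kronecker_mult_tensor matrix_works assms)

section \<open>Pseudo-orthonormal bases\<close>

definition orthonormal_wrt :: "('v::real_vector \<Rightarrow> 'v \<Rightarrow> real) \<Rightarrow> 'v set \<Rightarrow> bool" where
  "orthonormal_wrt B S \<longleftrightarrow>
     (\<forall>a\<in>S. \<forall>b\<in>S. a \<noteq> b \<longrightarrow> B a b = 0) \<and> (\<forall>a\<in>S. B a a = 1 \<or> B a a = -1)"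

definition integral_on :: "('v \<Rightarrow> 'v \<Rightarrow> real) \<Rightarrow> 'v set \<Rightarrow> ('v \<Rightarrow> 'v) \<Rightarrow> bool" where
  "integral_on B S f \<longleftrightarrow> (\<forall>a\<in>S. \<forall>b\<in>S. B (f a) b \<in> {1, -1, 0})"

lemma admissible_integral_module_iff:
  "admissible_integral_module p q J B \<longleftrightarrow> admissible_module p q J B \<and>
     (\<exists>S. independent S \<and> span S = UNIV \<and> orthonormal_wrt B S \<and>
        (\<forall>k<p+q. integral_on B S (J k)))"
  unfolding admissible_integral_module_def orthonormal_wrt_def integral_on_def
  by (simp add: conj_assoc)

lemma orthonormal_wrt_nonisotropic: "orthonormal_wrt B S \<Longrightarrow> a \<in> S \<Longrightarrow> B a a \<noteq> 0"
  unfolding orthonormal_wrt_def by force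

lemma orthonormal_wrt_sum_coeff:
  assumes "bilinear B" "orthonormal_wrt B S" "finite T" "T \<subseteq> S" "t \<in> T"
  shows "B (\<Sum>v\<in>T. c v *\<^sub>R v) t = c t * B t t"
proof -
  have lin: "linear (\<lambda>x. B x t)" using assms(1) by (simp add: bilinear_def)
  have "B (\<Sum>v\<in>T. c v *\<^sub>R v) t = (\<Sum>v\<in>T. c v * B v t)"
    by (simp add: linear_sum[OF lin] linear_scale[OF lin])
  also have "\<dots> = c t * B t t"
  proof -
    have "B v t = 0" if "v \<in> T - {t}" for v
      using assms(2,4,5) that unfolding orthonormal_wrt_def by blast
    then have "(\<Sum>v\<in>T - {t}. c v * B v t) = 0" by simp
    then show ?thesis using assms(3,5) by (simp add: sum.remove[of T t])
  qed
  finally show ?thesis .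
qed

lemma independent_if_orthonormal_wrt:
  assumes "bilinear B" "orthonormal_wrt B S"
  shows "independent S"
proof
  assume "dependent S"
  then obtain T c t where "finite T" "T \<subseteq> S" "t \<in> T" "c t \<noteq> 0" "(\<Sum>v\<in>T. c v *\<^sub>R v) = 0"
    unfolding dependent_explicit by blast
  moreover have "B t t \<noteq> 0"
    using orthonormal_wrt_nonisotropic[OF assms(2)] \<open>T \<subseteq> S\<close> \<open>t \<in> T\<close> by blast
  moreover have "c t * B t t = 0"
    using orthonormal_wrt_sum_coeff[OF assms \<open>finite T\<close> \<open>T \<subseteq> S\<close> \<open>t \<in> T\<close>, of c]
      \<open>(\<Sum>v\<in>T. c v *\<^sub>R v) = 0\<close> bilinear_lzero[OF assms(1)] by simp
  ultimately show False by simp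
qed

lemma scalar_product_if_orthonormal_basis:
  assumes "bilinear B" "\<And>x y. B x y = B y x" "orthonormal_wrt B S" "span S = UNIV"
  shows "scalar_product B"
  unfolding scalar_product_def
proof (intro conjI allI impI)
  fix x
  assume radical: "\<forall>y. B x y = 0"
  have "x \<in> span S" using assms(4) by simp
  then obtain T c where "finite T" "T \<subseteq> S" and x: "x = (\<Sum>v\<in>T. c v *\<^sub>R v)"
    unfolding span_explicit by blast
  have "c t = 0" if "t \<in> T" for t
  proof -
    have "B t t \<noteq> 0" using orthonormal_wrt_nonisotropic[OF assms(3)] \<open>T \<subseteq> S\<close> that by blast
    then show ?thesis
      using orthonormal_wrt_sum_coeff[OF assms(1,3) \<open>finite T\<close> \<open>T \<subseteq> S\<close> that]
        radical[rule_format, of t] x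
      by simp
  qed
  then show "x = 0" using x by simp
qed (rule assms(1), rule assms(2))

lemma integral_on_id: "orthonormal_wrt B S \<Longrightarrow> integral_on B S (\<lambda>x. x)"
  unfolding orthonormal_wrt_def integral_on_def by (metis insert_iff)

lemma integral_on_if_signed_permutation:
  assumes "bilinear B" "orthonormal_wrt B S" "\<And>a. a \<in> S \<Longrightarrow> f a \<in> S \<or> - f a \<in> S"
  shows "integral_on B S f"
  unfolding integral_on_def
proof (intro ballI)
  fix a b assume "a \<in> S" "b \<in> S"
  have id: "c \<in> S \<Longrightarrow> B c b \<in> {1, -1, 0}" for c
    using integral_on_id[OF assms(2)] \<open>b \<in> S\<close> unfolding integral_on_def by simp
  from assms(3)[OF \<open>a \<in> S\<close>] show "B (f a) b \<in> {1, -1, 0}"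
  proof
    assume "- f a \<in> S"
    then have "B (- f a) b \<in> {1, -1, 0}" by (rule id)
    then show ?thesis by (auto simp: bilinear_lneg[OF assms(1)])
  qed (rule id)
qed

lemma orthonormal_wrt_tensors:
  assumes B: "\<And>v u v' u'. B (tensor v u) (tensor v' u') = BV v v' * BU u u'"
    and A: "orthonormal_wrt BV A" and C: "orthonormal_wrt BU C"
  shows "orthonormal_wrt B ((\<lambda>(a, c). tensor a c) ` (A \<times> C))"
  unfolding orthonormal_wrt_def
proof (intro conjI ballI impI)
  fix s t
  assume "s \<in> (\<lambda>(a, c). tensor a c) ` (A \<times> C)" "t \<in> (\<lambda>(a, c). tensor a c) ` (A \<times> C)" "s \<noteq> t"
  then obtain a c a' c' where "a \<in> A" "c \<in> C" "s = tensor a c" "a' \<in> A" "c' \<in> C" "t = tensor a' c'"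
    by auto
  then show "B s t = 0"
    using \<open>s \<noteq> t\<close> A C B unfolding orthonormal_wrt_def by (cases "a = a'") auto
next
  fix s
  assume "s \<in> (\<lambda>(a, c). tensor a c) ` (A \<times> C)"
  then obtain a c where "a \<in> A" "c \<in> C" "s = tensor a c" by auto
  moreover have "BV a a = 1 \<or> BV a a = -1" "BU c c = 1 \<or> BU c c = -1"
    using A C \<open>a \<in> A\<close> \<open>c \<in> C\<close> unfolding orthonormal_wrt_def by auto
  ultimately show "B s s = 1 \<or> B s s = -1" using B by auto
qed

lemma integral_on_tensor_map:
  assumes B: "\<And>v u v' u'. B (tensor v u) (tensor v' u') = BV v v' * BU u u'"
    and "linear f" "linear g" and f: "integral_on BV A f" and g: "integral_on BU C g"
  shows "integral_on B ((\<lambda>(a, c). tensor a c) ` (A \<times> C)) (tensor_map f g)"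
  unfolding integral_on_def
proof (intro ballI)
  fix s t
  assume "s \<in> (\<lambda>(a, c). tensor a c) ` (A \<times> C)" "t \<in> (\<lambda>(a, c). tensor a c) ` (A \<times> C)"
  then obtain a c a' c' where "a \<in> A" "c \<in> C" "s = tensor a c" "a' \<in> A" "c' \<in> C" "t = tensor a' c'"
    by auto
  then have "B (tensor_map f g s) t = BV (f a) a' * BU (g c) c'"
    by (simp add: tensor_map_tensor \<open>linear f\<close> \<open>linear g\<close> B)
  moreover have "BV (f a) a' \<in> {1, -1, 0}" "BU (g c) c' \<in> {1, -1, 0}"
    using f g \<open>a \<in> A\<close> \<open>a' \<in> A\<close> \<open>c \<in> C\<close> \<open>c' \<in> C\<close> unfolding integral_on_def by auto
  ultimately show "B (tensor_map f g s) t \<in> {1, -1, 0}" by auto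
qed

section \<open>Admissible Cl(0,2)-modules\<close>

lemma bilinear_sum_left: "bilinear h \<Longrightarrow> h (sum f S) y = (\<Sum>s\<in>S. h (f s) y)"
  unfolding bilinear_def by (simp add: linear_sum[where f = "\<lambda>x. h x y"])

lemma bilinear_sum_right: "bilinear h \<Longrightarrow> h y (sum f S) = (\<Sum>s\<in>S. h y (f s))"
  unfolding bilinear_def by (simp add: linear_sum[where f = "h y"])

locale cl02_module =
  fixes K0 K1 :: "'v::euclidean_space \<Rightarrow> 'v" and BU :: "'v \<Rightarrow> 'v \<Rightarrow> real"
  assumes linear_K0: "linear K0" and linear_K1: "linear K1"
    and K0_K0 [simp]: "K0 (K0 x) = x" and K1_K1 [simp]: "K1 (K1 x) = x"
    and K1_K0: "K1 (K0 x) = - K0 (K1 x)"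
    and bilinear_BU: "bilinear BU" and BU_commute: "BU x y = BU y x"
    and BU_nondegenerate: "(\<And>y. BU x y = 0) \<Longrightarrow> x = 0"
    and BU_K0_skew: "BU (K0 x) y = - BU x (K0 y)" and BU_K1_skew: "BU (K1 x) y = - BU x (K1 y)"

lemma cl02_module_if_admissible:
  assumes "admissible_module 0 2 K BU"
  shows "cl02_module (K 0) (K 1) BU"
proof -
  have clifford: "\<forall>k<0+2. linear (K k)" "\<forall>k<0+2. \<forall>x. K k (K k x) = - (gen_sign 0 k *\<^sub>R x)"
    "\<forall>k<0+2. \<forall>l<0+2. k \<noteq> l \<longrightarrow> (\<forall>x. K k (K l x) = - K l (K k x))"
    using assms unfolding admissible_module_def clifford_rep_def by blast+
  have form: "scalar_product BU" "\<forall>k<0+2. \<forall>u v. BU (K k u) v = - BU u (K k v)"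
    using assms unfolding admissible_module_def by blast+
  show ?thesis
  proof (rule cl02_module.intro)
    show "linear (K 0)" "linear (K 1)" using clifford(1) by simp_all
    show "K 0 (K 0 x) = x" "K 1 (K 1 x) = x" for x using clifford(2) by (simp_all add: gen_sign_def)
    show "K 1 (K 0 x) = - K 0 (K 1 x)" for x using clifford(3)[rule_format, of 1 0] by simp
    show "bilinear BU" "BU x y = BU y x" "(\<And>y. BU x y = 0) \<Longrightarrow> x = 0" for x y
      using form(1) unfolding scalar_product_def by blast+
    show "BU (K 0 x) y = - BU x (K 0 y)" "BU (K 1 x) y = - BU x (K 1 y)" for x y
      using form(2) by simp_all
  qed
qed

context cl02_module
begin

lemmas K_linear_simps [simp] =
  linear_add[OF linear_K0] linear_diff[OF linear_K0] linear_neg[OF linear_K0]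
  linear_scale[OF linear_K0] linear_0[OF linear_K0] linear_sum[OF linear_K0]
  linear_add[OF linear_K1] linear_diff[OF linear_K1] linear_neg[OF linear_K1]
  linear_scale[OF linear_K1] linear_0[OF linear_K1] linear_sum[OF linear_K1]

lemmas BU_bilinear_simps [simp] =
  bilinear_ladd[OF bilinear_BU] bilinear_radd[OF bilinear_BU]
  bilinear_lsub[OF bilinear_BU] bilinear_rsub[OF bilinear_BU]
  bilinear_lneg[OF bilinear_BU] bilinear_rneg[OF bilinear_BU]
  bilinear_lmul[OF bilinear_BU] bilinear_rmul[OF bilinear_BU]
  bilinear_lzero[OF bilinear_BU] bilinear_rzero[OF bilinear_BU]
  bilinear_sum_left[OF bilinear_BU] bilinear_sum_right[OF bilinear_BU]

lemma BU_K0K1_skew: "BU (K0 (K1 x)) y = - BU x (K0 (K1 y))"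
  by (simp add: BU_K0_skew BU_K1_skew K1_K0)

lemma BU_self_K [simp]:
  "BU x (K0 x) = 0" "BU x (K1 x) = 0" "BU x (K0 (K1 x)) = 0"
  "BU (K0 x) x = 0" "BU (K1 x) x = 0" "BU (K0 (K1 x)) x = 0"
  using BU_K0_skew[of x x] BU_K1_skew[of x x] BU_K0K1_skew[of x x] BU_commute[of x] by auto

lemma BU_K_K [simp]:
  "BU (K0 x) (K0 y) = - BU x y" "BU (K1 x) (K1 y) = - BU x y"
  "BU (K0 (K1 x)) (K0 (K1 y)) = BU x y"
  by (simp_all add: BU_K0_skew BU_K1_skew)

lemma BU_K_cross [simp]:
  "BU (K0 x) (K1 x) = 0" "BU (K1 x) (K0 x) = 0"
  "BU (K0 x) (K0 (K1 x)) = 0" "BU (K0 (K1 x)) (K0 x) = 0"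
  "BU (K1 x) (K0 (K1 x)) = 0" "BU (K0 (K1 x)) (K1 x) = 0"
  by (simp_all add: BU_K0_skew BU_K1_skew K1_K0)

definition quad :: "'v \<Rightarrow> 'v set" where
  "quad e = {e, K0 e, K1 e, K0 (K1 e)}"

definition quads :: "'v set \<Rightarrow> 'v set" where
  "quads E = (\<Union>e\<in>E. quad e)"

definition quad_system :: "'v set \<Rightarrow> bool" where
  "quad_system E \<longleftrightarrow> finite E \<and> (\<forall>e\<in>E. BU e e = 1) \<and>
     (\<forall>e\<in>E. \<forall>e'\<in>E. e \<noteq> e' \<longrightarrow> (\<forall>q\<in>quad e. \<forall>q'\<in>quad e'. BU q q' = 0))"

text \<open>On \<open>quad e\<close> the form takes the values \<open>1, -1, -1, 1\<close>, whence the signs.\<close>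
definition proj :: "'v set \<Rightarrow> 'v \<Rightarrow> 'v" where
  "proj E x = (\<Sum>e\<in>E. BU x e *\<^sub>R e - BU x (K0 e) *\<^sub>R K0 e - BU x (K1 e) *\<^sub>R K1 e
     + BU x (K0 (K1 e)) *\<^sub>R K0 (K1 e))"

definition reflection :: "'v set \<Rightarrow> 'v \<Rightarrow> 'v" where
  "reflection E x = (\<Sum>e\<in>E. BU x e *\<^sub>R e - BU x (K0 e) *\<^sub>R K0 e + BU x (K1 e) *\<^sub>R K1 e
     - BU x (K0 (K1 e)) *\<^sub>R K0 (K1 e))"

lemma quad_memI [simp]: "e \<in> quad e" "K0 e \<in> quad e" "K1 e \<in> quad e" "K0 (K1 e) \<in> quad e"
  by (auto simp: quad_def)

lemma quads_memI: "e \<in> E \<Longrightarrow> q \<in> quad e \<Longrightarrow> q \<in> quads E"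
  by (auto simp: quads_def)

lemma quads_K0: "q \<in> quads E \<Longrightarrow> K0 q \<in> quads E"
  by (auto simp: quads_def quad_def)

lemma quads_K1: "q \<in> quads E \<Longrightarrow> K1 q \<in> quads E \<or> - K1 q \<in> quads E"
  by (auto simp: quads_def quad_def K1_K0)

lemma quad_system_finite: "quad_system E \<Longrightarrow> finite E"
  and quad_system_unit: "quad_system E \<Longrightarrow> e \<in> E \<Longrightarrow> BU e e = 1"
  unfolding quad_system_def by blast+

lemma quad_system_orthogonal:
  "quad_system E \<Longrightarrow> e \<in> E \<Longrightarrow> e' \<in> E \<Longrightarrow> e \<noteq> e' \<Longrightarrow> q \<in> quad e \<Longrightarrow> q' \<in> quad e' \<Longrightarrow> BU q q' = 0"
  unfolding quad_system_def by blast

lemma orthonormal_quads: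
  assumes "quad_system E"
  shows "orthonormal_wrt BU (quads E)"
  unfolding orthonormal_wrt_def
proof (intro conjI ballI impI)
  fix q q'
  assume "q \<in> quads E" "q' \<in> quads E" "q \<noteq> q'"
  then obtain e e' where "e \<in> E" "q \<in> quad e" "e' \<in> E" "q' \<in> quad e'" by (auto simp: quads_def)
  moreover have "BU e e = 1" using quad_system_unit[OF assms \<open>e \<in> E\<close>] .
  ultimately show "BU q q' = 0"
    using quad_system_orthogonal[OF assms] \<open>q \<noteq> q'\<close> by (cases "e = e'") (auto simp: quad_def)
next
  fix q
  assume "q \<in> quads E"
  then obtain e where "e \<in> E" "q \<in> quad e" by (auto simp: quads_def)
  moreover have "BU e e = 1" using quad_system_unit[OF assms \<open>e \<in> E\<close>] .
  ultimately show "BU q q = 1 \<or> BU q q = -1" by (auto simp: quad_def)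
qed

lemma BU_proj:
  assumes "quad_system E" "q \<in> quads E"
  shows "BU (proj E x) q = BU x q"
proof -
  obtain e where e: "e \<in> E" "q \<in> quad e" using assms(2) by (auto simp: quads_def)
  let ?c = "\<lambda>e. BU x e * BU e q - BU x (K0 e) * BU (K0 e) q - BU x (K1 e) * BU (K1 e) q
      + BU x (K0 (K1 e)) * BU (K0 (K1 e)) q"
  have "BU (proj E x) q = (\<Sum>e\<in>E. ?c e)" by (simp add: proj_def)
  also have "\<dots> = ?c e"
  proof -
    have "?c e' = 0" if "e' \<in> E" "e' \<noteq> e" for e'
      using quad_system_orthogonal[OF assms(1) that(1) e(1) that(2) _ e(2)] by simp
    then show ?thesis
      using quad_system_finite[OF assms(1)] e(1) by (subst sum.mono_neutral_right[of E "{e}"]) auto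
  qed
  also have "\<dots> = BU x q"
    using e(2) quad_system_unit[OF assms(1) e(1)] by (auto simp: quad_def BU_commute)
  finally show ?thesis .
qed

lemma proj_in_span: "proj E x \<in> span (quads E)"
  unfolding proj_def
  by (intro span_sum span_add span_diff span_scale span_base) (blast intro: quads_memI quad_memI)+

lemma proj_eq_self:
  assumes "quad_system E" "span (quads E) = UNIV"
  shows "proj E x = x"
proof -
  have "BU (proj E x - x) y = 0" for y
  proof (rule linear_eq_on_span[of "BU (proj E x - x)" "\<lambda>_. 0"])
    show "linear (BU (proj E x - x))" using bilinear_BU by (simp add: bilinear_def)
    show "y \<in> span (quads E)" using assms(2) by simp
  qed (use BU_proj[OF assms(1)] linear_zero in simp_all)
  then have "proj E x - x = 0" by (rule BU_nondegenerate)
  then show ?thesis by simp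
qed

lemma reflection_self:
  assumes "quad_system E" "e \<in> E"
  shows "reflection E e = e"
proof -
  let ?r = "\<lambda>e'. BU e e' *\<^sub>R e' - BU e (K0 e') *\<^sub>R K0 e' + BU e (K1 e') *\<^sub>R K1 e'
     - BU e (K0 (K1 e')) *\<^sub>R K0 (K1 e')"
  have "?r e' = 0" if "e' \<in> E" "e' \<noteq> e" for e'
    using quad_system_orthogonal[OF assms(1) assms(2) that(1) that(2)[symmetric] quad_memI(1)]
    by simp
  then have "reflection E e = ?r e"
    unfolding reflection_def using assms quad_system_finite
    by (subst sum.mono_neutral_right[of E "{e}"]) auto
  then show ?thesis using quad_system_unit[OF assms] by simp
qed

lemma reflection_K0: "reflection E (K0 x) = K0 (reflection E x)"
  unfolding reflection_def by (auto intro!: sum.cong simp: BU_K0_skew algebra_simps)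

lemma reflection_K1: "reflection E (K1 x) = - K1 (reflection E x)"
  unfolding reflection_def
  by (auto intro!: sum.cong simp: BU_K1_skew K1_K0 algebra_simps sum_negf[symmetric])

lemma BU_reflection: "BU (reflection E x) y = BU x (reflection E y)"
  unfolding reflection_def by (auto intro!: sum.cong simp: algebra_simps BU_commute[of y])

lemma linear_reflection: "linear (reflection E)"
  by (rule linearI)
     (simp_all add: reflection_def scaleR_sum_right sum.distrib[symmetric] algebra_simps)

lemma reflection_quads:
  assumes "quad_system E" "q \<in> quads E"
  shows "reflection E q = q \<or> reflection E q = - q"
  using assms reflection_self[OF assms(1)]
  by (auto simp: quads_def quad_def reflection_K0 reflection_K1)

lemma reflection_reflection:
  assumes "quad_system E"
  shows "reflection E (reflection E x) = proj E x"
  unfolding reflection_def[of E "reflection E x"] proj_def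
  by (intro sum.cong refl)
     (simp add: BU_reflection reflection_self[OF assms] reflection_K0 reflection_K1)

definition quads_perp :: "'v set \<Rightarrow> 'v set" where
  "quads_perp E = {z. \<forall>q\<in>quads E. BU z q = 0}"

lemma quads_perp_K0: "z \<in> quads_perp E \<Longrightarrow> K0 z \<in> quads_perp E"
  by (simp add: quads_perp_def BU_K0_skew quads_K0)

lemma quads_perp_K1:
  assumes "z \<in> quads_perp E"
  shows "K1 z \<in> quads_perp E"
  unfolding quads_perp_def mem_Collect_eq
proof
  fix q
  assume "q \<in> quads E"
  have perp: "BU z q' = 0" if "q' \<in> quads E" for q'
    using assms that by (simp add: quads_perp_def)
  from quads_K1[OF \<open>q \<in> quads E\<close>] have "BU z (K1 q) = 0"
  proof
    assume "- K1 q \<in> quads E"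
    then show ?thesis using perp[of "- K1 q"] by simp
  qed (rule perp)
  then show "BU (K1 z) q = 0" by (simp add: BU_K1_skew)
qed

lemma quads_perp_add: "z \<in> quads_perp E \<Longrightarrow> z' \<in> quads_perp E \<Longrightarrow> z + z' \<in> quads_perp E"
  and quads_perp_scale: "z \<in> quads_perp E \<Longrightarrow> c *\<^sub>R z \<in> quads_perp E"
  by (simp_all add: quads_perp_def)

lemma quads_perp_orthogonal_span:
  assumes "z \<in> quads_perp E" "w \<in> span (quads E)"
  shows "BU z w = 0"
proof (rule linear_eq_on_span[of "BU z" "\<lambda>_. 0", OF _ linear_zero _ assms(2)])
  show "linear (BU z)" using bilinear_BU by (simp add: bilinear_def)
qed (use assms(1) in \<open>simp add: quads_perp_def\<close>)

lemma residual_in_quads_perp: "quad_system E \<Longrightarrow> x - proj E x \<in> quads_perp E"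
  by (simp add: quads_perp_def BU_proj)

lemma ex_nonisotropic_in_quads_perp:
  assumes "quad_system E" "span (quads E) \<noteq> UNIV"
  obtains w where "w \<in> quads_perp E" "BU w w \<noteq> 0"
proof -
  obtain x where "x \<notin> span (quads E)" using assms(2) by blast
  define z where "z = x - proj E x"
  have "z \<in> quads_perp E" unfolding z_def by (rule residual_in_quads_perp[OF assms(1)])
  have "z \<noteq> 0" using \<open>x \<notin> span (quads E)\<close> proj_in_span[of E x] by (auto simp: z_def)
  then obtain y where "BU z y \<noteq> 0" using BU_nondegenerate by blast
  define z' where "z' = y - proj E y"
  have "z' \<in> quads_perp E" unfolding z'_def by (rule residual_in_quads_perp[OF assms(1)])
  have "BU z z' \<noteq> 0"
    using \<open>BU z y \<noteq> 0\<close> quads_perp_orthogonal_span[OF \<open>z \<in> quads_perp E\<close> proj_in_span]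
    by (simp add: z'_def)
  show thesis
  proof (cases "BU z z = 0 \<and> BU z' z' = 0")
    case True
    then have "BU (z + z') (z + z') = 2 * BU z z'" by (simp add: BU_commute[of z' z])
    then show thesis
      using that quads_perp_add[OF \<open>z \<in> quads_perp E\<close> \<open>z' \<in> quads_perp E\<close>] \<open>BU z z' \<noteq> 0\<close> by simp
  qed (use that \<open>z \<in> quads_perp E\<close> \<open>z' \<in> quads_perp E\<close> in blast)
qed

lemma ex_unit_in_quads_perp:
  assumes "quad_system E" "span (quads E) \<noteq> UNIV"
  obtains e where "e \<in> quads_perp E" "BU e e = 1"
proof -
  obtain w where w: "w \<in> quads_perp E" "BU w w \<noteq> 0"
    using ex_nonisotropic_in_quads_perp[OF assms] .
  (* if w has negative square, K0 w has positive square *)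
  obtain v where "v \<in> quads_perp E" "BU v v > 0"
  proof (cases "BU w w > 0")
    case False
    then show thesis using that[of "K0 w"] quads_perp_K0[OF w(1)] w(2) by simp
  qed (use that w(1) in blast)
  then show thesis
    using that[of "(1 / sqrt (BU v v)) *\<^sub>R v"] quads_perp_scale
    by (simp add: power2_eq_square[symmetric])
qed

lemma quad_system_insert:
  assumes E: "quad_system E" and e: "e \<in> quads_perp E" "BU e e = 1"
  shows "quad_system (insert e E)" and "e \<notin> E"
proof -
  have quad_perp: "quad e \<subseteq> quads_perp E"
    using e(1) quads_perp_K0 quads_perp_K1 by (auto simp: quad_def)
  have new_old: "BU q q' = 0" if "q \<in> quad e" "e' \<in> E" "q' \<in> quad e'" for q e' q'
    using quad_perp that quads_memI[OF that(2,3)] unfolding quads_perp_def by blast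
  show "quad_system (insert e E)"
    unfolding quad_system_def
  proof (intro conjI ballI impI)
    show "finite (insert e E)" using quad_system_finite[OF E] by simp
    show "BU e' e' = 1" if "e' \<in> insert e E" for e'
      using that e(2) quad_system_unit[OF E] by auto
    show "BU q q' = 0"
      if e12: "e1 \<in> insert e E" "e2 \<in> insert e E" "e1 \<noteq> e2"
        and q: "q \<in> quad e1" "q' \<in> quad e2" for e1 e2 q q'
    proof -
      consider "e1 = e" "e2 \<in> E" | "e2 = e" "e1 \<in> E" | "e1 \<in> E" "e2 \<in> E"
        using e12 by auto
      then show ?thesis
      proof cases
        case 1
        then show ?thesis using new_old q by blast
      next
        case 2
        then show ?thesis using new_old[of q' e1 q] q BU_commute[of q q'] by simp
      next
        case 3
        then show ?thesis using quad_system_orthogonal[OF E] e12(3) q by blast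
      qed
    qed
  qed
  show "e \<notin> E"
    using e quads_memI[of e E e] unfolding quads_perp_def by auto
qed

lemma card_quad_system_le:
  assumes "quad_system E"
  shows "card E \<le> DIM('v)"
proof -
  have "independent (quads E)"
    using independent_if_orthonormal_wrt[OF bilinear_BU orthonormal_quads[OF assms]] .
  moreover have "E \<subseteq> quads E" using quads_memI quad_memI(1) by blast
  ultimately show ?thesis using independent_bound independent_mono by blast
qed

lemma ex_complete_quad_system: "\<exists>E. quad_system E \<and> span (quads E) = UNIV"
proof -
  have "\<exists>E'. quad_system E' \<and> span (quads E') = UNIV" if "quad_system E" for E
    using that
  proof (induction "DIM('v) - card E" arbitrary: E rule: less_induct)
    case less
    show ?case
    proof (cases "span (quads E) = UNIV")
      case False
      then obtain e where e: "e \<in> quads_perp E" "BU e e = 1"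
        using ex_unit_in_quads_perp[OF less.prems] by blast
      note bigger = quad_system_insert[OF less.prems e]
      have "DIM('v) - card (insert e E) < DIM('v) - card E"
        using bigger card_quad_system_le[OF bigger(1)] quad_system_finite[OF less.prems] by simp
      then show ?thesis using less.hyps bigger(1) by blast
    qed (use less.prems in blast)
  qed
  moreover have "quad_system {}" by (simp add: quad_system_def)
  ultimately show ?thesis by blast
qed

definition twist :: "'v set \<Rightarrow> 'v \<Rightarrow> 'v" where
  "twist E x = - K1 (reflection E x)"

lemma linear_twist: "linear (twist E)"
  by (rule linearI)
     (simp_all add: twist_def linear_add[OF linear_reflection] linear_scale[OF linear_reflection])

lemma twist_twist:
  assumes "quad_system E" "span (quads E) = UNIV"
  shows "twist E (twist E x) = - x"
  by (simp add: twist_def linear_neg[OF linear_reflection] reflection_K1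
      reflection_reflection[OF assms(1)] proj_eq_self[OF assms])

lemma twist_K0: "twist E (K0 x) = - K0 (twist E x)"
  by (simp add: twist_def reflection_K0 K1_K0)

lemma twist_K1: "twist E (K1 x) = - K1 (twist E x)"
  by (simp add: twist_def reflection_K1)

lemma BU_twist: "BU (twist E x) y = BU x (twist E y)"
  by (simp add: twist_def BU_K1_skew BU_reflection reflection_K1)

lemma quads_twist:
  assumes "quad_system E" "q \<in> quads E"
  shows "twist E q \<in> quads E \<or> - twist E q \<in> quads E"
  using reflection_quads[OF assms] quads_K1[OF assms(2)] by (auto simp: twist_def)

lemma ex_twist_with_integral_basis:
  obtains M Q where "linear M" "\<And>x. M (M x) = - x"
    "\<And>x. M (K0 x) = - K0 (M x)" "\<And>x. M (K1 x) = - K1 (M x)" "\<And>x y. BU (M x) y = BU x (M y)"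
    "span Q = UNIV" "orthonormal_wrt BU Q"
    "integral_on BU Q M" "integral_on BU Q K0" "integral_on BU Q K1"
proof -
  obtain E where E: "quad_system E" "span (quads E) = UNIV"
    using ex_complete_quad_system by blast
  note orthonormal = orthonormal_quads[OF E(1)]
  show thesis
  proof (rule that[of "twist E" "quads E"])
    show "integral_on BU (quads E) (twist E)"
      using integral_on_if_signed_permutation[OF bilinear_BU orthonormal] quads_twist[OF E(1)] .
    show "integral_on BU (quads E) K0"
      using integral_on_if_signed_permutation[OF bilinear_BU orthonormal] quads_K0 by blast
    show "integral_on BU (quads E) K1"
      using integral_on_if_signed_permutation[OF bilinear_BU orthonormal] quads_K1 by blast
  qed (simp_all add: linear_twist twist_twist[OF E] twist_K0 twist_K1 BU_twist E(2) orthonormal)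
qed

end

section \<open>The tensor product module\<close>

lemma clifford_rep_linear: "clifford_rep p q J \<Longrightarrow> k < p + q \<Longrightarrow> linear (J k)"
  and clifford_rep_square:
    "clifford_rep p q J \<Longrightarrow> k < p + q \<Longrightarrow> J k (J k x) = - (gen_sign p k *\<^sub>R x)"
  and clifford_rep_anticommute:
    "clifford_rep p q J \<Longrightarrow> k < p + q \<Longrightarrow> l < p + q \<Longrightarrow> k \<noteq> l \<Longrightarrow> J k (J l x) = - J l (J k x)"
  unfolding clifford_rep_def by blast+

lemma bilinear_swap: "bilinear B \<Longrightarrow> bilinear (\<lambda>x y. B y x)"
  unfolding bilinear_def by blast

lemma bilinear_compose_left: "bilinear B \<Longrightarrow> linear f \<Longrightarrow> bilinear (\<lambda>x y. B (f x) y)"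
  unfolding bilinear_def using linear_compose[of f] by (auto simp: o_def)

lemma bilinear_uminus_compose_right: "bilinear B \<Longrightarrow> linear f \<Longrightarrow> bilinear (\<lambda>x y. - B x (f y))"
  unfolding bilinear_def using linear_compose[of f] by (auto simp: o_def intro: linear_compose_neg)

definition clifford_tensor :: "nat \<Rightarrow> (nat \<Rightarrow> real^'a \<Rightarrow> real^'a) \<Rightarrow> (real^'b \<Rightarrow> real^'b) \<Rightarrow>
    (nat \<Rightarrow> real^'b \<Rightarrow> real^'b) \<Rightarrow> nat \<Rightarrow> real^('a \<times> 'b) \<Rightarrow> real^('a \<times> 'b)"
  where "clifford_tensor n J M K k =
    tensor_map (if k < n then J k else (\<lambda>v. v)) (if k < n then M else K (k - n))"

lemma linear_clifford_tensor: "linear (clifford_tensor n J M K k)"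
  by (simp add: clifford_tensor_def linear_tensor_map)

lemma clifford_tensor_tensor:
  assumes "clifford_rep n 0 J" "clifford_rep 0 2 K" "linear M" "k < n + 2"
  shows "clifford_tensor n J M K k (tensor v u) =
    (if k < n then tensor (J k v) (M u) else tensor v (K (k - n) u))"
  using assms clifford_rep_linear[OF assms(1), of k] clifford_rep_linear[OF assms(2), of "k - n"]
  by (simp add: clifford_tensor_def tensor_map_tensor linear_ident)

lemma clifford_rep_clifford_tensor:
  assumes J: "clifford_rep n 0 J" and K: "clifford_rep 0 2 K" and M: "linear M" "\<And>x. M (M x) = - x"
    and M_K: "\<And>j x. j < 2 \<Longrightarrow> M (K j x) = - K j (M x)"
  shows "clifford_rep 0 (n + 2) (clifford_tensor n J M K)"
proof -
  let ?L = "clifford_tensor n J M K"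
  note L = clifford_tensor_tensor[OF J K M(1)]
  have J_J: "J k (J k v) = - v" if "k < n" for k v
    using clifford_rep_square[OF J, of k v] that by (simp add: gen_sign_def)
  have K_K: "K j (K j u) = u" if "j < 2" for j u
    using clifford_rep_square[OF K, of j u] that by (simp add: gen_sign_def)
  have linear_LL: "linear (\<lambda>x. ?L k (?L l x))" for k l
    using linear_compose[OF linear_clifford_tensor linear_clifford_tensor] by (simp add: o_def)
  have square: "?L k (?L k x) = x" if "k < n + 2" for k x
  proof -
    have eq: "(\<lambda>x. ?L k (?L k x)) = (\<lambda>x. x)"
      by (rule linear_eq_on_tensors[OF linear_LL linear_ident])
         (use that in \<open>auto simp: L J_J K_K M(2)\<close>)
    show ?thesis using fun_cong[OF eq, of x] by simp
  qed
  have anticommute: "?L k (?L l x) = - ?L l (?L k x)" if "k < n + 2" "l < n + 2" "k \<noteq> l" for k l x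
  proof -
    have "?L k (?L l (tensor v u)) = - ?L l (?L k (tensor v u))" for v u
    proof (cases "k < n"; cases "l < n")
      assume "k < n" "l < n"
      then show ?thesis using that clifford_rep_anticommute[OF J, of k l v] by (simp add: L)
    next
      assume "\<not> k < n" "\<not> l < n"
      then show ?thesis
        using that clifford_rep_anticommute[OF K, of "k - n" "l - n" u] by (simp add: L)
    qed (use that in \<open>simp_all add: L M_K\<close>)
    then have eq: "(\<lambda>x. ?L k (?L l x)) = (\<lambda>x. - ?L l (?L k x))"
      by (rule linear_eq_on_tensors[OF linear_LL linear_compose_neg[OF linear_LL]])
    show ?thesis using fun_cong[OF eq, of x] by simp
  qed
  have "?L k (?L k x) = - (gen_sign 0 k *\<^sub>R x)" if "k < n + 2" for k x
    using square[OF that] by (simp add: gen_sign_def)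
  then show ?thesis
    unfolding clifford_rep_def add_0_left using linear_clifford_tensor anticommute by blast
qed

lemma clifford_tensor_skew:
  assumes B: "bilinear B" "\<And>v u v' u'. B (tensor v u) (tensor v' u') = BV v v' * BU u u'"
    and V: "admissible_module n 0 J BV" and U: "admissible_module 0 2 K BU"
    and M: "linear M" "\<And>x y. BU (M x) y = BU x (M y)" and k: "k < n + 2"
  shows "B (clifford_tensor n J M K k x) y = - B x (clifford_tensor n J M K k y)"
proof -
  let ?L = "clifford_tensor n J M K k"
  have eq: "(\<lambda>x y. B (?L x) y) = (\<lambda>x y. - B x (?L y))"
  proof (rule bilinear_eq_on_tensors)
    show "bilinear (\<lambda>x y. B (?L x) y)"
      by (rule bilinear_compose_left[OF B(1) linear_clifford_tensor])
    show "bilinear (\<lambda>x y. - B x (?L y))"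
      by (rule bilinear_uminus_compose_right[OF B(1) linear_clifford_tensor])
    have "clifford_rep n 0 J" "clifford_rep 0 2 K"
      using V U unfolding admissible_module_def by blast+
    moreover have "BV (J k v) v' = - BV v (J k v')" if "k < n" for v v'
      using V that unfolding admissible_module_def by simp
    moreover have "BU (K (k - n) u) u' = - BU u (K (k - n) u')" if "\<not> k < n" for u u'
      using U that k unfolding admissible_module_def by simp
    ultimately show "B (?L (tensor v u)) (tensor v' u') = - B (tensor v u) (?L (tensor v' u'))"
      for v u v' u'
      using k by (simp add: clifford_tensor_tensor M B(2))
  qed
  show ?thesis using fun_cong[OF fun_cong[OF eq, of x], of y] by simp
qed

lemma scalar_product_tensor:
  assumes B: "bilinear B" "\<And>v u v' u'. B (tensor v u) (tensor v' u') = BV v v' * BU u u'"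
    and "\<And>v v'. BV v v' = BV v' v" "\<And>u u'. BU u u' = BU u' u"
    and A: "span A = UNIV" "orthonormal_wrt BV A" and C: "span C = UNIV" "orthonormal_wrt BU C"
  shows "scalar_product B"
proof (rule scalar_product_if_orthonormal_basis[OF B(1)])
  have "(\<lambda>x y. B x y) = (\<lambda>x y. B y x)"
    by (intro bilinear_eq_on_tensors[OF B(1) bilinear_swap[OF B(1)]]) (simp add: B(2) assms(3,4))
  then show "B x y = B y x" for x y by (metis (no_types))
  show "orthonormal_wrt B ((\<lambda>(a, c). tensor a c) ` (A \<times> C))"
    by (rule orthonormal_wrt_tensors[OF B(2) A(2) C(2)])
  show "span ((\<lambda>(a, c). tensor a c) ` (A \<times> C)) = UNIV"
    by (rule span_tensors_eq_UNIV[OF A(1) C(1)])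
qed

lemma integral_on_clifford_tensor:
  assumes B: "\<And>v u v' u'. B (tensor v u) (tensor v' u') = BV v v' * BU u u'"
    and J: "clifford_rep n 0 J" and K: "clifford_rep 0 2 K" and "linear M"
    and A: "orthonormal_wrt BV A" "\<forall>k<n. integral_on BV A (J k)"
    and C: "integral_on BU C M" "\<And>j. j < 2 \<Longrightarrow> integral_on BU C (K j)"
    and k: "k < n + 2"
  shows "integral_on B ((\<lambda>(a, c). tensor a c) ` (A \<times> C)) (clifford_tensor n J M K k)"
proof (cases "k < n")
  case True
  then show ?thesis
    using integral_on_tensor_map[where B = B and BV = BV and BU = BU and A = A, OF B
        clifford_rep_linear[OF J] \<open>linear M\<close> _ C(1)] A(2) by (simp add: clifford_tensor_def)
next
  case False
  then have "k - n < 2" using k by simp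
  then show ?thesis
    using integral_on_tensor_map[where B = B and BV = BV and BU = BU and A = A, OF B
        linear_ident clifford_rep_linear[OF K] integral_on_id[OF A(1)] C(2)] False
    by (simp add: clifford_tensor_def)
qed

lemma admissible_integral_module_clifford_tensor:
  assumes B: "bilinear B" "\<And>v u v' u'. B (tensor v u) (tensor v' u') = BV v v' * BU u u'"
    and V: "admissible_module n 0 J BV" and U: "admissible_module 0 2 K BU"
    and A: "span A = UNIV" "orthonormal_wrt BV A" "\<forall>k<n. integral_on BV A (J k)"
    and C: "span C = UNIV" "orthonormal_wrt BU C" "\<And>j. j < 2 \<Longrightarrow> integral_on BU C (K j)"
    and M: "linear M" "\<And>x. M (M x) = - x" "\<And>j x. j < 2 \<Longrightarrow> M (K j x) = - K j (M x)"
      "\<And>x y. BU (M x) y = BU x (M y)" "integral_on BU C M"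
  shows "admissible_integral_module 0 (n + 2) (clifford_tensor n J M K) B"
proof -
  have J: "clifford_rep n 0 J" and K: "clifford_rep 0 2 K"
    and BV: "scalar_product BV" and BU: "scalar_product BU"
    using V U unfolding admissible_module_def by blast+
  have "\<forall>k<0 + (n + 2). \<forall>x y.
      B (clifford_tensor n J M K k x) y = - B x (clifford_tensor n J M K k y)"
    using clifford_tensor_skew[OF B V U M(1,4)] by simp
  moreover have "scalar_product B"
    by (rule scalar_product_tensor[OF B _ _ A(1,2) C(1,2)])
       (use BV BU in \<open>simp_all add: scalar_product_def\<close>)
  ultimately have "admissible_module 0 (n + 2) (clifford_tensor n J M K) B"
    unfolding admissible_module_def using clifford_rep_clifford_tensor[OF J K M(1-3)] by blast
  moreover define S where "S = (\<lambda>(a, c). tensor a c) ` (A \<times> C)"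
  moreover have basis: "orthonormal_wrt B S"
    unfolding S_def by (rule orthonormal_wrt_tensors[OF B(2) A(2) C(2)])
  moreover have "independent S"
    by (rule independent_if_orthonormal_wrt[OF B(1) basis])
  moreover have "span S = UNIV"
    unfolding S_def by (rule span_tensors_eq_UNIV[OF A(1) C(1)])
  moreover have "\<forall>k<0 + (n + 2). integral_on B S (clifford_tensor n J M K k)"
    unfolding S_def using integral_on_clifford_tensor[OF B(2) J K M(1) A(2,3) M(5) C(3)] by simp
  ultimately show ?thesis
    unfolding admissible_integral_module_iff by blast
qed

theorem theorem7p5:
  fixes n :: nat
    and J :: "nat \<Rightarrow> real^'a \<Rightarrow> real^'a" and BV :: "real^'a \<Rightarrow> real^'a \<Rightarrow> real"
    and K :: "nat \<Rightarrow> real^'b \<Rightarrow> real^'b" and BU :: "real^'b \<Rightarrow> real^'b \<Rightarrow> real"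
    and B :: "real^('a \<times> 'b) \<Rightarrow> real^('a \<times> 'b) \<Rightarrow> real"
  assumes V: "admissible_integral_module n 0 J BV"
    and V_pos: "\<forall>x. x \<noteq> 0 \<longrightarrow> BV x x > 0"
    and U: "admissible_integral_module 0 2 K BU"
    and B_bil: "bilinear B"
    and B_tensor: "\<forall>v u v' u'. B (tensor v u) (tensor v' u') = BV v v' * BU u u'"
  shows "\<exists>L. admissible_integral_module 0 (n + 2) L B"
proof -
  obtain A where V_adm: "admissible_module n 0 J BV"
    and A: "span A = UNIV" "orthonormal_wrt BV A" "\<forall>k<n. integral_on BV A (J k)"
    using V unfolding admissible_integral_module_iff by auto
  have U_adm: "admissible_module 0 2 K BU"
    using U unfolding admissible_integral_module_def by blast
  interpret U: cl02_module "K 0" "K 1" BU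
    by (rule cl02_module_if_admissible[OF U_adm])
  obtain M C where M: "linear M" "\<And>x. M (M x) = - x" "\<And>x. M (K 0 x) = - K 0 (M x)"
      "\<And>x. M (K 1 x) = - K 1 (M x)" "\<And>x y. BU (M x) y = BU x (M y)"
    and C: "span C = UNIV" "orthonormal_wrt BU C"
      "integral_on BU C M" "integral_on BU C (K 0)" "integral_on BU C (K 1)"
    by (rule U.ex_twist_with_integral_basis) (rule that)
  have "M (K j x) = - K j (M x)" and "integral_on BU C (K j)" if "j < 2" for j x
    using that M(3,4) C(4,5) less_2_cases[of j] by auto
  then show ?thesis
    using admissible_integral_module_clifford_tensor[OF B_bil _ V_adm U_adm A C(1,2) _ M(1,2) _
        M(5) C(3)] B_tensor by blast
qed

end
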